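(* Let $Z\subseteq(\mathbb P^1)^d$ be the common vanishing locus of the multi-homogeneous polynomials $P^h$, where $P$ ranges over all linear forms $P=\sum_{\lambda\in\Phi^+}c_\lambda x_\lambda$ with $\sum_{\lambda}c_\lambda\lambda(h)=0$ for all $h\in\mathfrak h$. For a point $x=(x_\lambda)_{\lambda\in\Phi^+}\in Z$, put $\mathrm{Fin}=\{\lambda\in\Phi^+: x_\lambda\neq\infty\}$. Then $\mathrm{Fin}\cup(-\mathrm{Fin})$ is a closed root subsystem of $\Phi$.
   Context: Let $\mathfrak g$ be a complex semisimple Lie algebra, $\mathfrak h$ a Cartan subalgebra, $r=\dim\mathfrak h$, $\Phi\subset\mathfrak h^*$ its root system, $\Phi^+$ a fixed set of positive roots, $d=|\Phi^+|$. Points of $(\mathbb P^1)^d$ are written $x=(x_\lambda)_{\lambda\in\Phi^+}$ with $x_\lambda=[x_{\lambda,0}:x_{\lambda,1}]$; $\mathbb C$ is identified with $\{x_0\neq 0\}\subset\mathbb P^1$ via $c\mapsto [1:c]$, and $\infty=[0:1]$. For a linear form $P=\sum_\lambda c_\lambda x_\lambda$ with support $\mathrm{supp}(P)=\{\lambda:c_\lambda\neq0\}$, its multi-homogenization is $P^h=\sum_{\lambda\in\mathrm{supp}P}c_\lambda x_{\lambda,1}\prod_{\mu\in\mathrm{supp}P,\mu\neq\lambda}x_{\mu,0}$. A root subsystem $\Psi\subseteq\Phi$ is closed if $\lambda,\mu\in\Psi$ and $\lambda+\mu\in\Phi$ imply $\lambda+\mu\in\Psi$. *)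

theory Defs
  imports "HOL-Analysis.Analysis"
begin

(* Roots are modelled as vectors of a real Euclidean space 'a (the real form of h^*,
   identified with h via the Killing form). *)

definition root_reflect :: "'a::euclidean_space \<Rightarrow> 'a \<Rightarrow> 'a" where
  "root_reflect \<alpha> \<beta> = \<beta> - (2 * (\<beta> \<bullet> \<alpha>) / (\<alpha> \<bullet> \<alpha>)) *\<^sub>R \<alpha>"

(* reduced crystallographic root system spanning the ambient space (= root system of a
   complex semisimple Lie algebra, by the classification) *)
definition root_system :: "'a::euclidean_space set \<Rightarrow> bool" where
  "root_system \<Phi> \<longleftrightarrow>
     finite \<Phi> \<and> 0 \<notin> \<Phi> \<and> span \<Phi> = UNIV \<and>
     (\<forall>\<alpha>\<in>\<Phi>. \<forall>\<beta>\<in>\<Phi>. root_reflect \<alpha> \<beta> \<in> \<Phi>) \<and>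
     (\<forall>\<alpha>\<in>\<Phi>. \<forall>\<beta>\<in>\<Phi>. 2 * (\<beta> \<bullet> \<alpha>) / (\<alpha> \<bullet> \<alpha>) \<in> \<int>) \<and>
     (\<forall>\<alpha>\<in>\<Phi>. \<forall>c::real. c *\<^sub>R \<alpha> \<in> \<Phi> \<longrightarrow> c = 1 \<or> c = -1)"

definition positive_system :: "'a::euclidean_space set \<Rightarrow> 'a set \<Rightarrow> bool" where
  "positive_system \<Phi> \<Phi>p \<longleftrightarrow>
     (\<exists>f::'a. (\<forall>\<alpha>\<in>\<Phi>. f \<bullet> \<alpha> \<noteq> 0) \<and> \<Phi>p = {\<alpha>\<in>\<Phi>. f \<bullet> \<alpha> > 0})"

definition lf_supp :: "'a set \<Rightarrow> ('a \<Rightarrow> complex) \<Rightarrow> 'a set" where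
  "lf_supp \<Phi>p c = {l\<in>\<Phi>p. c l \<noteq> 0}"

(* multi-homogenization P^h evaluated at homogeneous coordinates x_lambda = (x_{lambda,0}, x_{lambda,1}) *)
definition homogenize_eval :: "'a set \<Rightarrow> ('a \<Rightarrow> complex) \<Rightarrow> ('a \<Rightarrow> complex \<times> complex) \<Rightarrow> complex" where
  "homogenize_eval \<Phi>p c x =
     (\<Sum>l\<in>lf_supp \<Phi>p c. c l * snd (x l) * (\<Prod>\<mu>\<in>lf_supp \<Phi>p c - {l}. fst (x \<mu>)))"

definition root_subsystem :: "'a::euclidean_space set \<Rightarrow> 'a set \<Rightarrow> bool" where
  "root_subsystem \<Phi> \<Psi> \<longleftrightarrow> \<Psi> \<subseteq> \<Phi> \<and> (\<forall>\<alpha>\<in>\<Psi>. - \<alpha> \<in> \<Psi>) \<and>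
     (\<forall>\<alpha>\<in>\<Psi>. \<forall>\<beta>\<in>\<Psi>. root_reflect \<alpha> \<beta> \<in> \<Psi>)"

definition closed_root_subsystem :: "'a::euclidean_space set \<Rightarrow> 'a set \<Rightarrow> bool" where
  "closed_root_subsystem \<Phi> \<Psi> \<longleftrightarrow> root_subsystem \<Phi> \<Psi> \<and>
     (\<forall>l\<in>\<Psi>. \<forall>\<mu>\<in>\<Psi>. l + \<mu> \<in> \<Phi> \<longrightarrow> l + \<mu> \<in> \<Psi>)"

end

theory Submission
  imports Defs
begin

text \<open>
  Let \<open>Fin\<close> be the set of positive roots with finite coordinate. If a positive root \<open>l\<close>
  with \<open>x\<^sub>l = \<infinity>\<close> were a linear combination of roots in \<open>Fin\<close>, the corresponding linear
  relation \<open>P = -x\<^sub>l + \<Sum> u\<^sub>\<mu> x\<^sub>\<mu>\<close> would have \<open>P\<^sup>h(x) = -x\<^sub>l\<^sub>,\<^sub>1 \<Prod> x\<^sub>\<mu>\<^sub>,\<^sub>0 \<noteq> 0\<close>, since every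
  other term of \<open>P\<^sup>h\<close> contains the factor \<open>x\<^sub>l\<^sub>,\<^sub>0 = 0\<close>. Hence \<open>Fin\<close> contains every positive
  root in its span, so \<open>Fin \<union> -Fin = \<Phi> \<inter> span Fin\<close>, and the intersection of a root system
  with a subspace is always a closed root subsystem.
\<close>

lemma root_system_uminus:
  assumes "root_system \<Phi>" "\<alpha> \<in> \<Phi>"
  shows "- \<alpha> \<in> \<Phi>"
proof -
  have "\<alpha> \<bullet> \<alpha> \<noteq> 0" using assms by (auto simp: root_system_def)
  then have "root_reflect \<alpha> \<alpha> = - \<alpha>"
    by (simp add: root_reflect_def algebra_simps scaleR_2)
  then show ?thesis using assms by (metis root_system_def)
qed

lemma closed_root_subsystem_Int_span:
  assumes "root_system \<Phi>"
  shows "closed_root_subsystem \<Phi> (\<Phi> \<inter> span S)"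
  unfolding closed_root_subsystem_def root_subsystem_def
proof (intro conjI ballI impI)
  fix \<alpha> assume "\<alpha> \<in> \<Phi> \<inter> span S"
  then show "- \<alpha> \<in> \<Phi> \<inter> span S"
    using root_system_uminus[OF assms] span_neg by blast
next
  fix \<alpha> \<beta> assume "\<alpha> \<in> \<Phi> \<inter> span S" "\<beta> \<in> \<Phi> \<inter> span S"
  then show "root_reflect \<alpha> \<beta> \<in> \<Phi> \<inter> span S"
    using assms unfolding root_system_def root_reflect_def
    by (auto intro: span_diff span_scale)
qed (auto intro: span_add)

lemma Int_span_eq_positive_union_uminus:
  assumes "root_system \<Phi>" "positive_system \<Phi> \<Phi>p"
    and "F \<subseteq> \<Phi>p" and span_closed: "\<And>\<beta>. \<beta> \<in> \<Phi>p \<Longrightarrow> \<beta> \<in> span F \<Longrightarrow> \<beta> \<in> F"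
  shows "\<Phi> \<inter> span F = F \<union> uminus ` F"
proof
  obtain f where f: "\<forall>\<alpha>\<in>\<Phi>. f \<bullet> \<alpha> \<noteq> 0" "\<Phi>p = {\<alpha>\<in>\<Phi>. f \<bullet> \<alpha> > 0}"
    using assms(2) by (auto simp: positive_system_def)
  show "\<Phi> \<inter> span F \<subseteq> F \<union> uminus ` F"
  proof
    fix \<beta> assume \<beta>: "\<beta> \<in> \<Phi> \<inter> span F"
    show "\<beta> \<in> F \<union> uminus ` F"
    proof (cases "f \<bullet> \<beta> > 0")
      case True
      then show ?thesis using \<beta> f span_closed by auto
    next
      case False
      then have "- \<beta> \<in> \<Phi>p"
        using \<beta> f root_system_uminus[OF assms(1)] by (auto simp: inner_minus_right)
      then have "- \<beta> \<in> F" using \<beta> span_closed span_neg by blast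
      then show ?thesis by (metis UnI2 image_eqI minus_minus)
    qed
  qed
  have "F \<subseteq> \<Phi>" using assms(3) f(2) by auto
  then show "F \<union> uminus ` F \<subseteq> \<Phi> \<inter> span F"
    using root_system_uminus[OF assms(1)] by (auto intro: span_base span_neg)
qed

lemma homogenize_eval_at_infinity:
  assumes "finite \<Phi>p" "l \<in> lf_supp \<Phi>p c" "fst (x l) = 0"
  shows "homogenize_eval \<Phi>p c x = c l * snd (x l) * (\<Prod>\<mu>\<in>lf_supp \<Phi>p c - {l}. fst (x \<mu>))"
proof -
  let ?S = "lf_supp \<Phi>p c"
  have fin: "finite ?S" using assms(1) by (simp add: lf_supp_def)
  have "(\<Prod>\<nu>\<in>?S - {\<mu>}. fst (x \<nu>)) = 0" if "\<mu> \<in> ?S - {l}" for \<mu>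
    using that assms(2,3) fin by (intro prod_zero) auto
  then have "(\<Sum>\<mu>\<in>?S - {l}. c \<mu> * snd (x \<mu>) * (\<Prod>\<nu>\<in>?S - {\<mu>}. fst (x \<nu>))) = 0"
    by simp
  then show ?thesis
    unfolding homogenize_eval_def
    by (simp add: sum.remove[OF fin assms(2),
        of "\<lambda>\<mu>. c \<mu> * snd (x \<mu>) * (\<Prod>\<nu>\<in>?S - {\<mu>}. fst (x \<nu>))"])
qed

lemma finite_coordinates_span_closed:
  fixes \<Phi>p :: "'a::euclidean_space set" and x :: "'a \<Rightarrow> complex \<times> complex"
  assumes fin: "finite \<Phi>p"
    and nonzero: "\<forall>l\<in>\<Phi>p. x l \<noteq> (0, 0)"
    and vanish: "\<forall>c::'a \<Rightarrow> complex.
           (\<forall>h::'a. (\<Sum>l\<in>\<Phi>p. c l * complex_of_real (l \<bullet> h)) = 0)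
           \<longrightarrow> homogenize_eval \<Phi>p c x = 0"
    and l: "l \<in> \<Phi>p" "l \<in> span {l\<in>\<Phi>p. fst (x l) \<noteq> 0}"
  shows "fst (x l) \<noteq> 0"
proof
  assume l0: "fst (x l) = 0"
  define F where "F = {l\<in>\<Phi>p. fst (x l) \<noteq> 0}"
  have "finite F" using fin by (simp add: F_def)
  then obtain u where u: "l = (\<Sum>v\<in>F. u v *\<^sub>R v)"
    using l(2) span_finite unfolding F_def[symmetric] by auto
  have "l \<notin> F" "F \<subseteq> \<Phi>p - {l}" using l0 by (auto simp: F_def)
  define d where "d \<mu> = (if \<mu> = l then -1 else if \<mu> \<in> F then u \<mu> else (0::real))" for \<mu>
  define c where "c \<mu> = complex_of_real (d \<mu>)" for \<mu>
  have "(\<Sum>\<mu>\<in>\<Phi>p - {l}. d \<mu> *\<^sub>R \<mu>) = (\<Sum>v\<in>F. u v *\<^sub>R v)"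
    by (rule sum.mono_neutral_cong_right) (use fin \<open>F \<subseteq> _\<close> \<open>l \<notin> F\<close> in \<open>auto simp: d_def\<close>)
  then have relation: "(\<Sum>\<mu>\<in>\<Phi>p. d \<mu> *\<^sub>R \<mu>) = 0"
    using sum.remove[OF fin l(1), of "\<lambda>\<mu>. d \<mu> *\<^sub>R \<mu>"] u by (simp add: d_def)
  have "(\<Sum>\<mu>\<in>\<Phi>p. c \<mu> * complex_of_real (\<mu> \<bullet> h)) = 0" for h
  proof -
    have "(\<Sum>\<mu>\<in>\<Phi>p. c \<mu> * complex_of_real (\<mu> \<bullet> h))
        = complex_of_real ((\<Sum>\<mu>\<in>\<Phi>p. d \<mu> *\<^sub>R \<mu>) \<bullet> h)"
      by (simp add: c_def inner_sum_left)
    then show ?thesis using relation by simp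
  qed
  then have "homogenize_eval \<Phi>p c x = 0" using vanish by blast
  moreover have supp: "l \<in> lf_supp \<Phi>p c" using l(1) by (simp add: lf_supp_def c_def d_def)
  moreover have "(\<Prod>\<nu>\<in>lf_supp \<Phi>p c - {l}. fst (x \<nu>)) \<noteq> 0"
    using fin by (auto simp: lf_supp_def c_def d_def F_def split: if_splits)
  moreover have "snd (x l) \<noteq> 0" using nonzero l(1) l0 by (cases "x l") auto
  ultimately show False
    using homogenize_eval_at_infinity[where x = x, OF fin supp l0] by (simp add: c_def d_def)
qed

theorem mainTheorem2:
  fixes \<Phi> \<Phi>p :: "'a::euclidean_space set"
    and x :: "'a \<Rightarrow> complex \<times> complex"
  assumes "root_system \<Phi>"
    and "positive_system \<Phi> \<Phi>p"
    and "\<forall>l\<in>\<Phi>p. x l \<noteq> (0, 0)"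
    and "\<forall>c::'a \<Rightarrow> complex.
           (\<forall>h::'a. (\<Sum>l\<in>\<Phi>p. c l * complex_of_real (l \<bullet> h)) = 0)
           \<longrightarrow> homogenize_eval \<Phi>p c x = 0"
  shows "closed_root_subsystem \<Phi>
           ({l\<in>\<Phi>p. fst (x l) \<noteq> 0} \<union> uminus ` {l\<in>\<Phi>p. fst (x l) \<noteq> 0})"
proof -
  define Fin where "Fin = {l\<in>\<Phi>p. fst (x l) \<noteq> 0}"
  have "finite \<Phi>p"
    using assms(1,2) by (auto simp: root_system_def positive_system_def)
  then have "\<beta> \<in> Fin" if "\<beta> \<in> \<Phi>p" "\<beta> \<in> span Fin" for \<beta>
    using finite_coordinates_span_closed[OF _ assms(3,4)] that by (auto simp: Fin_def)
  then have "\<Phi> \<inter> span Fin = Fin \<union> uminus ` Fin"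
    using Int_span_eq_positive_union_uminus[OF assms(1,2)] by (auto simp: Fin_def)
  then show ?thesis
    using closed_root_subsystem_Int_span[OF assms(1), of Fin] by (simp add: Fin_def)
qed

end
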